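(* Every quotient of a finite weakly-top group is weakly-top. Every quotient of a finite top group is top.
   Context: For a group $H$, $H'$ denotes its commutator subgroup. A finite group $G$ is weakly-top if $|H/H'| \leq |G/G'|$ for every proper subgroup $H<G$, and top if $|H/H'| < |G/G'|$ for every proper subgroup $H<G$. *)

theory Defs
  imports "HOL-Algebra.Algebra"
begin

text \<open>The order of the abelianization H/H' of a subgroup H of G, where
  H' = derived G H is the commutator subgroup of H (generated by commutators
  of elements of H).\<close>
definition abel_order :: "('a, 'b) monoid_scheme \<Rightarrow> 'a set \<Rightarrow> nat" where
  "abel_order G H = card ((\<lambda>h. derived G H #>\<^bsub>G\<^esub> h) ` H)"

definition weakly_top :: "('a, 'b) monoid_scheme \<Rightarrow> bool" where
  "weakly_top G \<longleftrightarrow> group G \<and> finite (carrier G) \<and>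
     (\<forall>H. subgroup H G \<and> H \<noteq> carrier G \<longrightarrow> abel_order G H \<le> abel_order G (carrier G))"

definition top_group :: "('a, 'b) monoid_scheme \<Rightarrow> bool" where
  "top_group G \<longleftrightarrow> group G \<and> finite (carrier G) \<and>
     (\<forall>H. subgroup H G \<and> H \<noteq> carrier G \<longrightarrow> abel_order G H < abel_order G (carrier G))"

end

theory Submission
  imports Defs
begin

text \<open>For a normal subgroup N and a subgroup H \<supseteq> N of a finite group G, counting cosets gives
  |(H/N)/(H/N)'| \<cdot> |N| = |H/H'| \<cdot> |H' \<inter> N|, because (H/N)' = H'N/N.  Every proper subgroup of
  G/N has the form K = H/N with H proper, and H' \<subseteq> G'.  So |K/K'| \<cdot> |N| \<le> |H/H'| \<cdot> |G' \<inter> N|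
  while |(G/N)/(G/N)'| \<cdot> |N| = |G/G'| \<cdot> |G' \<inter> N|, and since |G' \<inter> N| > 0 both the weak and the
  strict inequality pass from H to K.\<close>

lemma card_image_eq_if_same_fibres:
  assumes "\<And>x y. x \<in> A \<Longrightarrow> y \<in> A \<Longrightarrow> f x = f y \<longleftrightarrow> g x = g y"
  shows "card (f ` A) = card (g ` A)"
proof -
  let ?fg = "\<lambda>x. (f x, g x)"
  have "inj_on fst (?fg ` A)" "inj_on snd (?fg ` A)"
    using assms by (auto simp: inj_on_def)
  then have "card (fst ` ?fg ` A) = card (snd ` ?fg ` A)"
    by (simp add: card_image)
  then show ?thesis
    by (simp add: image_image)
qed

lemma (in group) rcos_eq_iff_mult_inv_mem:
  assumes "subgroup H G" "x \<in> carrier G" "y \<in> carrier G"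
  shows "H #> x = H #> y \<longleftrightarrow> x \<otimes> inv y \<in> H"
  using subgroup.rcos_module[OF assms(1) is_group assms(3,2)] rcos_self[OF assms(2,1)]
    repr_independence[OF _ assms(3,1)] by blast

lemma (in group) card_eq_card_rcos_image_mult_card_Int:
  assumes S: "subgroup S G" and H: "subgroup H G"
  shows "card S = card ((\<lambda>s. H #> s) ` S) * card (S \<inter> H)"
proof -
  interpret S: group "G\<lparr>carrier := S\<rparr>"
    using subgroup_imp_group[OF S] .
  have SH: "subgroup (S \<inter> H) G"
    using S H by (rule subgroups_Inter_pair)
  have "subgroup (S \<inter> H) (G\<lparr>carrier := S\<rparr>)"
    using subgroup_incl[OF SH S] by blast
  then have "card (rcosets\<^bsub>G\<lparr>carrier := S\<rparr>\<^esub> (S \<inter> H)) * card (S \<inter> H) = card S"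
    using S.lagrange by (simp add: order_def)
  moreover have "rcosets\<^bsub>G\<lparr>carrier := S\<rparr>\<^esub> (S \<inter> H) = (\<lambda>s. (S \<inter> H) #> s) ` S"
    unfolding RCOSETS_def r_coset_def by auto
  moreover have "card ((\<lambda>s. (S \<inter> H) #> s) ` S) = card ((\<lambda>s. H #> s) ` S)"
  proof (rule card_image_eq_if_same_fibres)
    fix x y assume "x \<in> S" "y \<in> S"
    moreover from this have "x \<in> carrier G" "y \<in> carrier G" "x \<otimes> inv y \<in> S"
      using S by (auto simp: subgroup.mem_carrier subgroup.m_closed subgroup.m_inv_closed)
    ultimately show "(S \<inter> H) #> x = (S \<inter> H) #> y \<longleftrightarrow> H #> x = H #> y"
      using rcos_eq_iff_mult_inv_mem[OF SH] rcos_eq_iff_mult_inv_mem[OF H] by blast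
  qed
  ultimately show ?thesis
    by simp
qed

lemma (in group) card_eq_abel_order_mult_card_derived:
  assumes "subgroup H G"
  shows "card H = abel_order G H * card (derived G H)"
proof -
  have "derived G H \<subseteq> H"
    using derived_incl[OF _ assms] by blast
  then have "H \<inter> derived G H = derived G H"
    by blast
  moreover have "subgroup (derived G H) G"
    using derived_is_subgroup subgroup.subset[OF assms] by blast
  ultimately show ?thesis
    using card_eq_card_rcos_image_mult_card_Int[OF assms] unfolding abel_order_def by simp
qed

lemma (in group_hom) subgroup_vimage:
  assumes "subgroup K H"
  shows "subgroup {x \<in> carrier G. h x \<in> K} G"
proof (rule G.subgroupI)
  show "{x \<in> carrier G. h x \<in> K} \<noteq> {}"
    using subgroup.one_closed[OF assms] by force
qed (auto simp: subgroup.m_closed[OF assms] subgroup.m_inv_closed[OF assms])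

lemma (in normal) r_coset_group_hom_Mod: "group_hom G (G Mod H) (\<lambda>a. H #> a)"
  using r_coset_hom_Mod
  by (simp add: group_hom_def group_hom_axioms_def is_group factorgroup_is_group)

lemma (in normal) subgroup_FactGroup_eq_image:
  assumes K: "subgroup K (G Mod H)"
  obtains L where "subgroup L G" "H \<subseteq> L" "(\<lambda>a. H #> a) ` L = K"
proof
  let ?L = "{x \<in> carrier G. H #> x \<in> K}"
  show "subgroup ?L G"
    using group_hom.subgroup_vimage[OF r_coset_group_hom_Mod K] .
  show "H \<subseteq> ?L"
    using subgroup.one_closed[OF K] by (auto simp: rcos_const)
  show "(\<lambda>a. H #> a) ` ?L = K"
    using subgroup.subset[OF K] by (auto simp: carrier_FactGroup)
qed

lemma (in group) abel_order_FactGroup_image: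
  assumes fin: "finite (carrier G)" and N: "N \<lhd> G"
    and H: "subgroup H G" and NH: "N \<subseteq> H"
  shows "abel_order (G Mod N) ((\<lambda>a. N #> a) ` H) * card N
         = abel_order G H * card (derived G H \<inter> N)"
proof -
  interpret Q: group "G Mod N"
    using normal.factorgroup_is_group[OF N] .
  interpret p: group_hom G "G Mod N" "\<lambda>a. N #> a"
    using normal.r_coset_group_hom_Mod[OF N] .
  let ?p = "\<lambda>a. N #> a" and ?D = "derived G H"
  have NG: "subgroup N G"
    using N by (rule normal_imp_subgroup)
  have DG: "subgroup ?D G"
    using derived_is_subgroup[OF subgroup.subset[OF H]] .
  have "card (?p ` ?D) * (abel_order (G Mod N) (?p ` H) * card N) = card (?p ` H) * card N"
    using Q.card_eq_abel_order_mult_card_derived[OF p.subgroup_img_is_subgroup[OF H]]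
      p.derived_img[OF subgroup.subset[OF H]] by simp
  also have "\<dots> = card H"
    using card_eq_card_rcos_image_mult_card_Int[OF H NG] NH by (simp add: Int_absorb1)
  also have "\<dots> = abel_order G H * card ?D"
    using card_eq_abel_order_mult_card_derived[OF H] .
  also have "\<dots> = card (?p ` ?D) * (abel_order G H * card (?D \<inter> N))"
    using card_eq_card_rcos_image_mult_card_Int[OF DG NG] by simp
  finally show ?thesis
    using subgroup.finite_imp_card_positive[OF p.subgroup_img_is_subgroup[OF DG]] fin
    by (simp add: carrier_FactGroup)
qed

corollary (in group) abel_order_FactGroup:
  assumes "finite (carrier G)" "N \<lhd> G"
  shows "abel_order (G Mod N) (carrier (G Mod N)) * card N
         = abel_order G (carrier G) * card (derived G (carrier G) \<inter> N)"
  using abel_order_FactGroup_image[OF assms subgroup_self]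
    subgroup.subset[OF normal_imp_subgroup[OF assms(2)]]
  by (simp add: carrier_FactGroup)

lemma (in group) proper_subgroup_FactGroup_abel_order_le:
  assumes fin: "finite (carrier G)" and N: "N \<lhd> G"
    and K: "subgroup K (G Mod N)" "K \<noteq> carrier (G Mod N)"
  obtains H where "subgroup H G" "H \<noteq> carrier G"
    "abel_order (G Mod N) K * card N \<le> abel_order G H * card (derived G (carrier G) \<inter> N)"
proof -
  obtain H where H: "subgroup H G" "N \<subseteq> H" and K_eq: "(\<lambda>a. N #> a) ` H = K"
    using normal.subgroup_FactGroup_eq_image[OF N K(1)] .
  have "H \<noteq> carrier G"
    using K(2) K_eq by (auto simp: carrier_FactGroup)
  moreover have "card (derived G H \<inter> N) \<le> card (derived G (carrier G) \<inter> N)"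
    using mono_derived[OF subgroup.subset[OF H(1)]] fin
      subgroup.subset[OF normal_imp_subgroup[OF N]]
    by (intro card_mono) (auto intro: finite_subset)
  then have "abel_order (G Mod N) K * card N \<le> abel_order G H * card (derived G (carrier G) \<inter> N)"
    using abel_order_FactGroup_image[OF fin N H] K_eq by simp
  ultimately show ?thesis
    using that H(1) by blast
qed

theorem lemma2p2:
  fixes G :: "('a, 'b) monoid_scheme" and N :: "'a set"
  assumes "group G" and "finite (carrier G)" and "N \<lhd> G"
  shows "(weakly_top G \<longrightarrow> weakly_top (G Mod N)) \<and> (top_group G \<longrightarrow> top_group (G Mod N))"
proof -
  interpret group G by (rule assms(1))
  let ?Q = "G Mod N" and ?d = "card (derived G (carrier G) \<inter> N)"
  have Q: "group ?Q" "finite (carrier ?Q)"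
    using normal.factorgroup_is_group[OF assms(3)] assms(2) by (auto simp: carrier_FactGroup)
  have N_pos: "card N > 0"
    using subgroup.finite_imp_card_positive[OF normal_imp_subgroup[OF assms(3)] assms(2)] .
  have d_pos: "?d > 0"
    using subgroup.finite_imp_card_positive[OF subgroups_Inter_pair, OF derived_is_subgroup
        normal_imp_subgroup[OF assms(3)] assms(2)] by simp
  note abel_Q = abel_order_FactGroup[OF assms(2,3)]
  note reduce = proper_subgroup_FactGroup_abel_order_le[OF assms(2,3)]
  have "weakly_top ?Q" if "weakly_top G"
    unfolding weakly_top_def
  proof (intro conjI allI impI Q)
    fix K assume "subgroup K ?Q \<and> K \<noteq> carrier ?Q"
    then obtain H where "subgroup H G" "H \<noteq> carrier G"
      and "abel_order ?Q K * card N \<le> abel_order G H * ?d" using reduce by blast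
    with that have "abel_order ?Q K * card N \<le> abel_order ?Q (carrier ?Q) * card N"
      unfolding weakly_top_def abel_Q by (meson le_trans mult_le_mono1)
    then show "abel_order ?Q K \<le> abel_order ?Q (carrier ?Q)"
      using N_pos by simp
  qed
  moreover have "top_group ?Q" if "top_group G"
    unfolding top_group_def
  proof (intro conjI allI impI Q)
    fix K assume "subgroup K ?Q \<and> K \<noteq> carrier ?Q"
    then obtain H where "subgroup H G" "H \<noteq> carrier G"
      and "abel_order ?Q K * card N \<le> abel_order G H * ?d" using reduce by blast
    with that d_pos have "abel_order ?Q K * card N < abel_order ?Q (carrier ?Q) * card N"
      unfolding top_group_def abel_Q by (meson le_less_trans mult_less_mono1)
    then show "abel_order ?Q K < abel_order ?Q (carrier ?Q)"
      using N_pos by simp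
  qed
  ultimately show ?thesis
    by blast
qed

end
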